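(* Let $n$ be a composite positive integer and let $\pi\in S(\mathbb{Z}_n)$ be a permutation induced by a polynomial with coefficients in $\mathbb{Z}_n$ (i.e. there is $f\in\mathbb{Z}_n[x]$ with $\pi(x)=f(x)$ for all $x\in\mathbb{Z}_n$). Then $t([\pi])\leq n-3$.
   Context: $S(\mathbb{Z}_n)$ is the set of bijections $\mathbb{Z}_n\to\mathbb{Z}_n$. For $\pi\in S(\mathbb{Z}_n)$, $\mathrm{cyc}(\pi)$ is the number of cycles (including fixed points) of $\pi$, $t(\pi)=n-\mathrm{cyc}(\pi)$, $[\pi]=\{x\mapsto \pi(x+b): b\in\mathbb{Z}_n\}$ and $t([\pi])=\min_{\sigma\in[\pi]}t(\sigma)$. *)

theory Defs
  imports "HOL-Computational_Algebra.Polynomial" "HOL-Computational_Algebra.Primes"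
begin

text \<open>Z_n is modelled as the set {..<n} of natural numbers with arithmetic mod n.
  A permutation of Z_n is a function nat => nat that is a bijection of {..<n}.\<close>

definition perm_Zn :: "nat \<Rightarrow> (nat \<Rightarrow> nat) \<Rightarrow> bool" where
  "perm_Zn n \<pi> \<longleftrightarrow> bij_betw \<pi> {..<n} {..<n}"

definition poly_induced :: "nat \<Rightarrow> (nat \<Rightarrow> nat) \<Rightarrow> bool" where
  "poly_induced n \<pi> \<longleftrightarrow> (\<exists>f :: int poly. \<forall>x<n. int (\<pi> x) = poly f (int x) mod int n)"

definition cycle_of :: "(nat \<Rightarrow> nat) \<Rightarrow> nat \<Rightarrow> nat set" where
  "cycle_of \<pi> x = {(\<pi> ^^ k) x | k. True}"

definition cyc :: "nat \<Rightarrow> (nat \<Rightarrow> nat) \<Rightarrow> nat" where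
  "cyc n \<pi> = card (cycle_of \<pi> ` {..<n})"

definition tnum :: "nat \<Rightarrow> (nat \<Rightarrow> nat) \<Rightarrow> nat" where
  "tnum n \<pi> = n - cyc n \<pi>"

definition shift_perm :: "nat \<Rightarrow> (nat \<Rightarrow> nat) \<Rightarrow> nat \<Rightarrow> (nat \<Rightarrow> nat)" where
  "shift_perm n \<pi> b = (\<lambda>x. \<pi> ((x + b) mod n))"

definition perm_class :: "nat \<Rightarrow> (nat \<Rightarrow> nat) \<Rightarrow> (nat \<Rightarrow> nat) set" where
  "perm_class n \<pi> = shift_perm n \<pi> ` {..<n}"

definition tclass :: "nat \<Rightarrow> (nat \<Rightarrow> nat) \<Rightarrow> nat" where
  "tclass n \<pi> = Min (tnum n ` perm_class n \<pi>)"

end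

theory Submission
  imports Defs "HOL-Number_Theory.Cong"
begin

text \<open>Choose b with \<pi>(b) = 0 and pass to \<sigma>(x) = \<pi>(x + b), which fixes 0. For a prime p properly
  dividing n, \<sigma>(x) \<equiv> f(x + b) \<equiv> f(b) \<equiv> 0 (mod p) whenever p divides x, so \<sigma> preserves the
  multiples of p and hence also the non-multiples. Thus {0}, the cycle of p and the cycle of 1 are
  three different cycles of \<sigma>, and t([\<pi>]) \<le> t(\<sigma>) \<le> n - 3.\<close>

lemma cong_poly:
  fixes f :: "'a::unique_euclidean_semiring poly"
  assumes "[a = b] (mod m)"
  shows "[poly f a = poly f b] (mod m)"
  by (induction f) (simp_all add: cong_add cong_mult assms)

lemma poly_induced_cong:
  assumes "poly_induced n \<pi>" "d dvd n" "x < n" "y < n" "[x = y] (mod d)"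
  shows "[\<pi> x = \<pi> y] (mod d)"
proof -
  obtain f :: "int poly" where f: "\<And>x. x < n \<Longrightarrow> int (\<pi> x) = poly f (int x) mod int n"
    using assms(1) unfolding poly_induced_def by blast
  have "int d dvd int n"
    using assms(2) by simp
  then have mod_n: "[int (\<pi> z) = poly f (int z)] (mod int d)" if "z < n" for z
    using f[OF that] by (simp add: cong_def mod_mod_cancel)
  have "[poly f (int x) = poly f (int y)] (mod int d)"
    using assms(5) by (intro cong_poly) (simp add: cong_int_iff)
  then have "[int (\<pi> x) = int (\<pi> y)] (mod int d)"
    using mod_n[OF assms(3)] mod_n[OF assms(4)] by (meson cong_sym cong_trans)
  then show ?thesis by (simp add: cong_int_iff)
qed

lemma shift_perm_preserves_multiples:
  assumes "poly_induced n \<pi>" "d dvd n" "b < n" "\<pi> b = 0" "d dvd x"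
  shows "d dvd shift_perm n \<pi> b x"
proof -
  have "[(x + b) mod n = x + b] (mod d)"
    by (rule cong_dvd_modulus_nat[OF _ assms(2)]) (simp add: cong_def)
  also have "[x + b = 0 + b] (mod d)"
    using assms(5) by (intro cong_add) (simp_all add: cong_0_iff)
  finally have "[(x + b) mod n = b] (mod d)"
    by simp
  moreover have "(x + b) mod n < n"
    using assms(3) by simp
  ultimately have "[\<pi> ((x + b) mod n) = \<pi> b] (mod d)"
    using poly_induced_cong[OF assms(1,2) _ assms(3)] by blast
  then show ?thesis
    using assms(4) by (simp add: shift_perm_def cong_0_iff)
qed

lemma bij_betw_add_mod: "bij_betw (\<lambda>x. (x + b) mod n) {..<n} {..<(n::nat)}"
proof (cases "n = 0")
  case False
  have "inj_on (\<lambda>x. (x + b) mod n) {..<n}"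
  proof (rule inj_onI)
    fix x y
    assume "x \<in> {..<n}" "y \<in> {..<n}" "(x + b) mod n = (y + b) mod n"
    then show "x = y"
      by (auto simp: cong_def [symmetric] cong_add_rcancel_nat intro: cong_less_modulus_unique_nat)
  qed
  then show ?thesis
    using False by (intro bij_betw_imageI endo_inj_surj) auto
qed (simp add: bij_betw_def)

lemma perm_Zn_shift_perm: "perm_Zn n \<pi> \<Longrightarrow> perm_Zn n (shift_perm n \<pi> b)"
  unfolding perm_Zn_def shift_perm_def
  using bij_betw_trans[OF bij_betw_add_mod] by (simp add: comp_def)

lemma tclass_le_tnum_shift_perm: "b < n \<Longrightarrow> tclass n \<pi> \<le> tnum n (shift_perm n \<pi> b)"
  unfolding tclass_def perm_class_def by simp

lemma self_in_cycle_of: "x \<in> cycle_of g x"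
  unfolding cycle_of_def by (metis (mono_tags) CollectI funpow_0)

lemma cycle_of_subset:
  assumes "\<And>y. y \<in> S \<Longrightarrow> g y \<in> S" "x \<in> S"
  shows "cycle_of g x \<subseteq> S"
proof -
  have "(g ^^ k) x \<in> S" for k
    using assms by (induction k) auto
  then show ?thesis
    unfolding cycle_of_def by blast
qed

lemma cycle_of_fixpoint: "g x = x \<Longrightarrow> cycle_of g x = {x}"
  using cycle_of_subset[of "{x}" g x] self_in_cycle_of[of x g] by auto

lemma bij_betw_preserves_complement:
  assumes "bij_betw g U U" "finite U" "S \<subseteq> U" "g ` S \<subseteq> S" "x \<in> U - S"
  shows "g x \<in> U - S"
proof -
  have inj: "inj_on g U"
    using assms(1) by (rule bij_betw_imp_inj_on)
  then have "g ` S = S"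
    using assms(2-4) by (intro endo_inj_surj) (auto intro: finite_subset inj_on_subset)
  then show ?thesis
    using assms(1,3,5) inj by (auto dest: inj_onD bij_betw_apply)
qed

lemma card_cycle_of_image_le_cyc:
  "X \<subseteq> {..<n} \<Longrightarrow> card (cycle_of g ` X) \<le> cyc n g"
  unfolding cyc_def by (intro card_mono) auto

lemma tnum_le_n_minus_3_if_invariant:
  assumes "perm_Zn n g" "g 0 = 0" "S \<subseteq> {..<n}" "g ` S \<subseteq> S"
    and "0 \<in> S" "a \<in> S" "a \<noteq> 0" "c < n" "c \<notin> S"
  shows "tnum n g \<le> n - 3"
proof -
  have "cycle_of g a \<subseteq> S"
    using assms(4,6) by (intro cycle_of_subset) auto
  moreover have "cycle_of g c \<subseteq> {..<n} - S"
    using assms(1,3,4,8,9) bij_betw_preserves_complement[of g "{..<n}" S]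
    by (intro cycle_of_subset) (auto simp: perm_Zn_def)
  ultimately have "cycle_of g a \<noteq> cycle_of g c" "cycle_of g a \<noteq> {0}" "cycle_of g c \<noteq> {0}"
    using assms(5,7) self_in_cycle_of[of a g] self_in_cycle_of[of c g] by auto
  then have "card (cycle_of g ` {0, a, c}) = 3"
    using assms(2) by (simp add: cycle_of_fixpoint)
  moreover have "{0, a, c} \<subseteq> {..<n}"
    using assms(3,6,8) by auto
  ultimately show ?thesis
    using card_cycle_of_image_le_cyc[of "{0, a, c}" n g] unfolding tnum_def by simp
qed

theorem proposition1p6:
  fixes n :: nat and \<pi> :: "nat \<Rightarrow> nat"
  assumes "n > 1" and "\<not> prime n"
    and "perm_Zn n \<pi>" and "poly_induced n \<pi>"
  shows "tclass n \<pi> \<le> n - 3"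
proof -
  obtain p where p: "prime p" "p dvd n"
    using assms(1) prime_factor_nat[of n] by auto
  have "p < n"
    using p assms(1,2) dvd_imp_le[OF p(2)] by (cases "p = n") auto
  have "0 \<in> \<pi> ` {..<n}"
    using assms(1,3) by (simp add: perm_Zn_def bij_betw_def)
  then obtain b where b: "b < n" "\<pi> b = 0"
    by auto
  define \<sigma> where "\<sigma> = shift_perm n \<pi> b"
  have \<sigma>: "perm_Zn n \<sigma>"
    using assms(3) by (simp add: \<sigma>_def perm_Zn_shift_perm)
  have "tnum n \<sigma> \<le> n - 3"
  proof (rule tnum_le_n_minus_3_if_invariant[OF \<sigma>, of "{x. x < n \<and> p dvd x}" p 1])
    show "\<sigma> ` {x. x < n \<and> p dvd x} \<subseteq> {x. x < n \<and> p dvd x}"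
      using \<sigma> shift_perm_preserves_multiples[OF assms(4) p(2) b] bij_betw_apply[of \<sigma> "{..<n}" "{..<n}"]
      by (auto simp: \<sigma>_def perm_Zn_def)
  qed (use assms(1) p \<open>p < n\<close> b in \<open>auto simp: \<sigma>_def shift_perm_def prime_gt_1_nat\<close>)
  then show ?thesis
    using tclass_le_tnum_shift_perm[OF b(1), of \<pi>] by (simp add: \<sigma>_def)
qed

end
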